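(* Let $L\mathfrak{g}^{\sigma^*}$, $\widetilde G$ and its coadjoint action $\mathrm{Ad}^*_{\widetilde G}$ be as in the context. For integers $m\ge 0$ and $p\ge1$ let $$\widetilde{\mathfrak g}^*_{(m,p)}=\Big\{X\in L\mathfrak{g}^{\sigma^*}\ :\ X(z)=\sum_{j=-m}^{p}X_jz^j\Big\}.$$ Then $\widetilde{\mathfrak g}^*_{(m,p)}$ is invariant under $\mathrm{Ad}^*_{\widetilde G}(g)$ for every $g\in\widetilde G$.
   Context: $LG$ is the group of smooth loops $g:S^1\to GL(n,\mathbb{C})$ with $\overline{g(z)}=g(\bar z)$; $LG^{\Sigma}=\{g\in LG: g(z)g(-z)^T=I\}$. $LG^{\Sigma}_+$ (resp. $LG^{\Sigma}_-$) is the subgroup of loops in $LG^{\Sigma}$ extending analytically (as invertible matrices) to the interior (resp. exterior) of the unit circle, with the extra requirement $g(\infty)=I$ for $LG^{\Sigma}_-$. $\widetilde G=\{g\in LG^{\Sigma}: g=g_+g_-^{-1},\ g_+\in LG^{\Sigma}_+,\ g_-\in LG^{\Sigma}_-\}$; the factors $g_\pm$ are unique. $L\mathfrak{g}^{\sigma^*}$ is the space of loops $X(z)=\sum_jX_jz^j$ with real $n\times n$ coefficients, $X_{2j}$ symmetric and $X_{2j+1}$ skew-symmetric. $\Pi_+$ (resp. $\Pi_-$) is the projection $\sum_jX_jz^j\mapsto\sum_{j\ge0}X_jz^j$ (resp. $\sum_{j<0}X_jz^j$). The coadjoint action of $g=g_+g_-^{-1}\in\widetilde G$ on $A\in L\mathfrak{g}^{\sigma^*}$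 is $\mathrm{Ad}^*_{\widetilde G}(g)A=\Pi_-(g_+^{-1}Ag_+)+\Pi_+(g_-^{-1}Ag_-)$. *)

theory Defs
  imports "HOL-Analysis.Analysis"
begin

type_synonym 'n cmat = "complex ^ 'n ^ 'n"

text \<open>Loops are functions on the complex plane of which only the values on the unit
circle (sphere 0 1) matter.\<close>

definition cscale :: "complex \<Rightarrow> 'n::finite cmat \<Rightarrow> 'n::finite cmat" where
  "cscale c M = (\<chi> a b. c * M $ a $ b)"

definition cnj_mat :: "'n::finite cmat \<Rightarrow> 'n::finite cmat" where
  "cnj_mat M = (\<chi> a b. cnj (M $ a $ b))"

definition smooth_loop :: "(complex \<Rightarrow> 'n::finite cmat) \<Rightarrow> bool" where
  "smooth_loop g \<longleftrightarrow> (\<exists>D :: nat \<Rightarrow> real \<Rightarrow> 'n::finite cmat.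
      D 0 = (\<lambda>t. g (cis t)) \<and>
      (\<forall>k t. (D k has_vector_derivative D (Suc k) t) (at t)))"

definition fourier_coeff :: "(complex \<Rightarrow> 'n::finite cmat) \<Rightarrow> int \<Rightarrow> 'n::finite cmat" where
  "fourier_coeff X j = (\<chi> a b. integral {0..2*pi}
      (\<lambda>t. cis (- of_int j * t) * X (cis t) $ a $ b) / complex_of_real (2*pi))"

definition Pi_plus :: "(complex \<Rightarrow> 'n::finite cmat) \<Rightarrow> complex \<Rightarrow> 'n::finite cmat" where
  "Pi_plus X z = (\<Sum>k. cscale (z ^ k) (fourier_coeff X (int k)))"

definition Pi_minus :: "(complex \<Rightarrow> 'n::finite cmat) \<Rightarrow> complex \<Rightarrow> 'n::finite cmat" where
  "Pi_minus X z = (\<Sum>k. cscale (inverse z ^ Suc k) (fourier_coeff X (- int (Suc k))))"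

definition LG :: "(complex \<Rightarrow> 'n::finite cmat) set" where
  "LG = {g. smooth_loop g \<and> (\<forall>z\<in>sphere 0 1. invertible (g z)) \<and>
            (\<forall>z\<in>sphere 0 1. cnj_mat (g z) = g (cnj z))}"

definition LG_Sigma :: "(complex \<Rightarrow> 'n::finite cmat) set" where
  "LG_Sigma = {g. g \<in> LG \<and> (\<forall>z\<in>sphere 0 1. g z ** transpose (g (- z)) = mat 1)}"

definition LG_Sigma_plus :: "(complex \<Rightarrow> 'n::finite cmat) set" where
  "LG_Sigma_plus = {g. g \<in> LG_Sigma \<and>
     (\<exists>G :: complex \<Rightarrow> 'n::finite cmat. continuous_on (cball 0 1) G \<and>
        (\<forall>a b. (\<lambda>z. G z $ a $ b) holomorphic_on ball 0 1) \<and>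
        (\<forall>z\<in>cball 0 1. invertible (G z)) \<and>
        (\<forall>z\<in>sphere 0 1. G z = g z))}"

definition LG_Sigma_minus :: "(complex \<Rightarrow> 'n::finite cmat) set" where
  "LG_Sigma_minus = {g. g \<in> LG_Sigma \<and>
     (\<exists>G :: complex \<Rightarrow> 'n::finite cmat. continuous_on {z. 1 \<le> norm z} G \<and>
        (\<forall>a b. (\<lambda>z. G z $ a $ b) holomorphic_on {z. 1 < norm z}) \<and>
        (\<forall>z\<in>{z. 1 \<le> norm z}. invertible (G z)) \<and>
        (G \<longlongrightarrow> mat 1) at_infinity \<and>
        (\<forall>z\<in>sphere 0 1. G z = g z))}"

definition G_tilde :: "(complex \<Rightarrow> 'n::finite cmat) set" where
  "G_tilde = {g. g \<in> LG_Sigma \<and> (\<exists>gp gm. gp \<in> LG_Sigma_plus \<and> gm \<in> LG_Sigma_minus \<and>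
                 (\<forall>z\<in>sphere 0 1. g z = gp z ** matrix_inv (gm z)))}"

definition Lg_sigma_star :: "(complex \<Rightarrow> 'n::finite cmat) set" where
  "Lg_sigma_star = {X. smooth_loop X \<and>
     (\<forall>j a b. Im (fourier_coeff X j $ a $ b) = 0) \<and>
     (\<forall>j. even j \<longrightarrow> transpose (fourier_coeff X j) = fourier_coeff X j) \<and>
     (\<forall>j. odd j \<longrightarrow> transpose (fourier_coeff X j) = - fourier_coeff X j)}"

definition g_star_mp :: "nat \<Rightarrow> nat \<Rightarrow> (complex \<Rightarrow> 'n::finite cmat) set" where
  "g_star_mp m p = {X. X \<in> Lg_sigma_star \<and>
     (\<forall>z\<in>sphere 0 1. X z = (\<Sum>j\<in>{- int m..int p}. cscale (z powi j) (fourier_coeff X j)))}"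

text \<open>Coadjoint action of g = g_+ g_-^{-1}, given via its (unique) factors.\<close>
definition Ad_star :: "(complex \<Rightarrow> 'n::finite cmat) \<Rightarrow> (complex \<Rightarrow> 'n::finite cmat) \<Rightarrow>
    (complex \<Rightarrow> 'n::finite cmat) \<Rightarrow> complex \<Rightarrow> 'n::finite cmat" where
  "Ad_star gp gm A z =
     Pi_minus (\<lambda>w. matrix_inv (gp w) ** A w ** gp w) z +
     Pi_plus (\<lambda>w. matrix_inv (gm w) ** A w ** gm w) z"

end

theory Submission
  imports Defs "HOL-Complex_Analysis.Cauchy_Integral_Formula"
begin

(* For K in LG_Sigma we have K(z)^-1 = K(-z)^T on the unit circle, so K^-1 A K equals
   sigma_conj K A z = K(-z)^T A(z) K(z). This loop inherits from A the reality condition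
   cnj (X z) = X (cnj z) and the twisted symmetry X(z)^T = X(-z), which on Fourier coefficients
   say precisely that the coefficients are real, symmetric for even and skew for odd index.
   For gp, A(z) = z^-m P(z) with P a polynomial, so sigma_conj gp A is z^-m times the boundary
   value of a function holomorphic in the disc, and Cauchy's theorem kills its coefficients
   below -m; after z |-> 1/z the same argument kills the coefficients of sigma_conj gm A above p.
   Hence Pi_-(gp^-1 A gp) + Pi_+(gm^-1 A gm) is a Laurent polynomial with exponents in [-m, p]
   whose coefficients have the required symmetries. *)

lemma cscale_nth [simp]: "cscale c M $ a $ b = c * M $ a $ b"
  by (simp add: cscale_def)

lemma cnj_mat_nth [simp]: "cnj_mat M $ a $ b = cnj (M $ a $ b)"
  by (simp add: cnj_mat_def)

lemma cnj_mat_mmult: "cnj_mat (M ** N) = cnj_mat M ** cnj_mat N"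
  by (simp add: vec_eq_iff matrix_matrix_mult_def)

lemma cnj_mat_transpose: "cnj_mat (transpose M) = transpose (cnj_mat M)"
  by (simp add: vec_eq_iff transpose_def)

lemma cscale_mmult_left: "cscale c M ** N = cscale c (M ** N)"
  by (simp add: vec_eq_iff matrix_matrix_mult_def sum_distrib_left mult.assoc)

lemma cscale_mmult_right: "M ** cscale c N = cscale c (M ** N)"
  by (simp add: vec_eq_iff matrix_matrix_mult_def sum_distrib_left algebra_simps)

lemma cscale_eq_scaleR: "cscale c M = Re c *\<^sub>R M + Im c *\<^sub>R cscale \<i> M"
proof -
  have "c = complex_of_real (Re c) + \<i> * complex_of_real (Im c)"
    by (simp add: complex_eq_iff)
  then have "c * x = Re c *\<^sub>R x + Im c *\<^sub>R (\<i> * x)" for x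
    by (metis mult.assoc mult.left_commute distrib_right scaleR_conv_of_real)
  then show ?thesis
    by (simp add: vec_eq_iff)
qed

lemma bounded_linear_cscale: "bounded_linear (\<lambda>c. cscale c M)"
proof -
  have "bounded_linear (\<lambda>c. Re c *\<^sub>R M + Im c *\<^sub>R cscale \<i> M)"
    by (intro bounded_linear_add bounded_linear_compose[OF bounded_linear_scaleR_left]
        bounded_linear_Re bounded_linear_Im)
  then show ?thesis
    by (simp add: cscale_eq_scaleR[symmetric])
qed

lemma matrix_inv_eqI:
  fixes M N :: "'a::field^'n::finite^'n"
  assumes "M ** N = mat 1"
  shows "matrix_inv M = N"
proof -
  have NM: "N ** M = mat 1"
    using assms matrix_left_right_inverse by blast
  have inv: "M ** matrix_inv M = mat 1 \<and> matrix_inv M ** M = mat 1"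
    unfolding matrix_inv_def by (rule someI[of _ N]) (use assms NM in auto)
  have "matrix_inv M = matrix_inv M ** (M ** N)"
    using assms by simp
  also have "\<dots> = N"
    using inv by (simp add: matrix_mul_assoc)
  finally show ?thesis .
qed

subsection \<open>Integrals of periodic functions\<close>

lemma cis_int_mult_periodic: "cis (of_int j * (t + 2*pi)) = cis (of_int j * t)"
proof -
  have "cis (of_int j * (t + 2*pi)) = cis (of_int j * t) * cis (of_int j * (2*pi))"
    by (simp add: cis_mult distrib_left)
  also have "cis (of_int j * (2*pi)) = cis (2*pi) powi j"
    by (rule cis_power_int[symmetric])
  finally show ?thesis by simp
qed

lemma integral_periodic_shift:
  fixes f :: "real \<Rightarrow> complex"
  assumes cont: "continuous_on UNIV f" and per: "\<And>t. f (t + 2*pi) = f t"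
    and c: "0 \<le> c" "c \<le> 2*pi"
  shows "integral {0..2*pi} (\<lambda>t. f (t + c)) = integral {0..2*pi} f"
proof -
  have int: "\<And>a b. f integrable_on {a..b}"
    by (rule integrable_continuous_real) (rule continuous_on_subset[OF cont], simp)
  have "integral {0..2*pi} (\<lambda>t. f (t + c)) = integral {c..2*pi+c} f"
    using integral_shift_real_ivl[where a=c and b="2*pi+c" and c=c and f=f] by simp
  also have "\<dots> = integral {c..2*pi} f + integral {2*pi..2*pi+c} f"
    using Henstock_Kurzweil_Integration.integral_combine[of c "2*pi" "2*pi+c" f] int c by simp
  also have "integral {2*pi..2*pi+c} f = integral {0..c} (\<lambda>t. f (t + 2*pi))"
    using integral_shift_real_ivl[where a="2*pi" and b="2*pi+c" and c="2*pi" and f=f] by simp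
  also have "\<dots> = integral {0..c} f"
    using per by simp
  also have "integral {c..2*pi} f + integral {0..c} f = integral {0..2*pi} f"
    using Henstock_Kurzweil_Integration.integral_combine[of 0 c "2*pi" f] int c
    by (simp add: add.commute)
  finally show ?thesis .
qed

lemma integral_periodic_reflect:
  fixes f :: "real \<Rightarrow> complex"
  assumes per: "\<And>t. f (t + 2*pi) = f t"
  shows "integral {0..2*pi} (\<lambda>t. f (- t)) = integral {0..2*pi} f"
proof -
  have "integral {0..2*pi} (\<lambda>t. f (- t)) = integral {-(2*pi)..0} f"
    using Henstock_Kurzweil_Integration.integral_reflect_real[where a="-(2*pi)" and b=0 and f=f]
    by (simp only: minus_zero minus_minus)
  also have "\<dots> = integral {0..2*pi} (\<lambda>t. f (t + - (2*pi)))"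
    using integral_shift_real_ivl[where a="-(2*pi)" and b=0 and c="-(2*pi)" and f=f]
    by (simp only: diff_self diff_minus_eq_add add.left_neutral)
  also have "\<dots> = integral {0..2*pi} f"
    using per[of "t - 2*pi" for t] by (simp add: algebra_simps)
  finally show ?thesis .
qed

lemma integral_cis_int:
  "integral {0..2*pi} (\<lambda>t. cis (of_int k * t)) = (if k = 0 then 2*pi else 0)"
proof (cases "k = 0")
  case True
  then show ?thesis by (simp add: scaleR_conv_of_real)
next
  case False
  have "((\<lambda>t. cis (of_int k * t)) has_integral
      cis (of_int k * (2*pi)) / (\<i> * of_int k) - cis (of_int k * 0) / (\<i> * of_int k)) {0..2*pi}"
  proof (rule fundamental_theorem_of_calculus)
    fix t :: real
    show "((\<lambda>t. cis (of_int k * t) / (\<i> * of_int k)) has_vector_derivative cis (of_int k * t))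
        (at t within {0..2*pi})"
      using False by (auto intro!: derivative_eq_intros
          simp: has_vector_derivative_def scaleR_conv_of_real field_simps)
  qed simp
  moreover have "cis (of_int k * (2*pi)) = 1"
    using cis_int_mult_periodic[of k 0] by simp
  ultimately show ?thesis
    using False by (simp add: integral_unique)
qed

subsection \<open>Fourier coefficients\<close>

lemma fourier_coeff_nth:
  "fourier_coeff X j $ a $ b =
     integral {0..2*pi} (\<lambda>t. cis (- of_int j * t) * X (cis t) $ a $ b) / complex_of_real (2*pi)"
  by (simp add: fourier_coeff_def)

lemma fourier_coeff_cong:
  assumes "\<forall>z\<in>sphere 0 1. X z = Y z"
  shows "fourier_coeff X = fourier_coeff Y"
  using assms by (simp add: fourier_coeff_def fun_eq_iff)

lemma cis_mult_powi: "cis (- of_int j * t) * cis t powi i = cis (of_int (i - j) * t)"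
  by (simp add: cis_power_int cis_mult algebra_simps)

lemma fourier_coeff_mult_powi:
  "fourier_coeff (\<lambda>z. cscale (z powi k) (X z)) j = fourier_coeff X (j - k)"
proof -
  have "cis (- of_int j * t) * (cis t powi k * x) = cis (- of_int (j - k) * t) * x" for t x
  proof -
    have "cis (- of_int j * t) * (cis t powi k * x) = cis (of_int (k - j) * t) * x"
      by (simp only: mult.assoc[symmetric] cis_mult_powi)
    then show ?thesis
      by (simp add: algebra_simps)
  qed
  then show ?thesis
    unfolding fourier_coeff_def by (simp only: cscale_nth)
qed

lemma fourier_coeff_compose_inverse:
  "fourier_coeff (\<lambda>z. X (inverse z)) j = fourier_coeff X (- j)"
proof -
  have "integral {0..2*pi} (\<lambda>t. cis (- of_int j * t) * X (cis (- t)) $ a $ b) =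
        integral {0..2*pi} (\<lambda>t. cis (of_int j * t) * X (cis t) $ a $ b)" for a b
    using integral_periodic_reflect[of "\<lambda>t. cis (of_int j * t) * X (cis t) $ a $ b"]
    by (simp add: cis_int_mult_periodic cis_mult[symmetric])
  then show ?thesis
    by (simp add: fourier_coeff_def)
qed

lemma fourier_coeff_cnj_mat:
  "fourier_coeff (\<lambda>z. cnj_mat (X z)) j = cnj_mat (fourier_coeff X (- j))"
  by (simp add: fourier_coeff_def vec_eq_iff integral_cnj cis_cnj)

lemma fourier_coeff_real:
  assumes "\<forall>z\<in>sphere 0 1. cnj_mat (X z) = X (cnj z)"
  shows "Im (fourier_coeff X j $ a $ b) = 0"
proof -
  have "\<forall>z\<in>sphere 0 1. X z = cnj_mat (X (inverse z))"
    using assms divide_conv_cnj[of _ 1] by (auto simp: divide_inverse)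
  then have "fourier_coeff X j = fourier_coeff (\<lambda>z. cnj_mat (X (inverse z))) j"
    by (simp only: fourier_coeff_cong)
  also have "\<dots> = cnj_mat (fourier_coeff X j)"
    by (simp only: fourier_coeff_cnj_mat fourier_coeff_compose_inverse minus_minus)
  finally have "fourier_coeff X j = cnj_mat (fourier_coeff X j)" .
  then have "fourier_coeff X j $ a $ b = cnj (fourier_coeff X j $ a $ b)"
    by (metis cnj_mat_nth)
  then show ?thesis
    by (simp add: complex_eq_iff)
qed

lemma fourier_coeff_compose_uminus:
  assumes cont: "continuous_on UNIV (\<lambda>t. X (cis t))"
  shows "fourier_coeff (\<lambda>z. X (- z)) j = cscale ((-1) powi j) (fourier_coeff X j)"
proof -
  have "integral {0..2*pi} (\<lambda>t. cis (- of_int j * t) * X (- cis t) $ a $ b) =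
        (-1) powi j * integral {0..2*pi} (\<lambda>t. cis (- of_int j * t) * X (cis t) $ a $ b)" for a b
  proof -
    define f where "f = (\<lambda>t. cis (- of_int j * t) * X (cis t) $ a $ b)"
    have "cis (- of_int j * t) * X (- cis t) $ a $ b = (-1) powi j * f (t + pi)" for t
    proof -
      have "cis (- of_int j * t) = cis (of_int j * pi) * cis (- of_int j * (t + pi))"
        by (simp add: cis_mult algebra_simps)
      also have "cis (of_int j * pi) = (-1) powi j"
        using cis_power_int[of pi j] by simp
      finally have "cis (- of_int j * t) = (-1) powi j * cis (- of_int j * (t + pi))" .
      moreover have "- cis t = cis (t + pi)"
        by (simp add: cis_mult[symmetric])
      ultimately show ?thesis
        by (simp add: f_def)
    qed
    then have "integral {0..2*pi} (\<lambda>t. cis (- of_int j * t) * X (- cis t) $ a $ b) =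
        (-1) powi j * integral {0..2*pi} (\<lambda>t. f (t + pi))"
      by (simp add: integral_mult_right)
    also have "integral {0..2*pi} (\<lambda>t. f (t + pi)) = integral {0..2*pi} f"
    proof (rule integral_periodic_shift)
      show "continuous_on UNIV f"
        unfolding f_def by (intro continuous_intros continuous_on_component cont)
      show "f (t + 2*pi) = f t" for t
        using cis_int_mult_periodic[of "- j" t] by (simp add: f_def cis_mult[symmetric])
    qed auto
    finally show ?thesis
      by (simp only: f_def)
  qed
  then show ?thesis
    by (simp add: fourier_coeff_def vec_eq_iff)
qed

lemma fourier_coeff_transpose:
  "fourier_coeff (\<lambda>z. transpose (X z)) j = transpose (fourier_coeff X j)"
  by (simp add: fourier_coeff_def transpose_def)

lemma transpose_fourier_coeff_parity:
  assumes "continuous_on UNIV (\<lambda>t. X (cis t))" and "\<forall>z\<in>sphere 0 1. transpose (X z) = X (- z)"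
  shows "transpose (fourier_coeff X j) = (if even j then fourier_coeff X j else - fourier_coeff X j)"
proof -
  have "transpose (fourier_coeff X j) = fourier_coeff (\<lambda>z. transpose (X z)) j"
    by (rule fourier_coeff_transpose[symmetric])
  also have "\<dots> = fourier_coeff (\<lambda>z. X (- z)) j"
    using fourier_coeff_cong[OF assms(2)] by simp
  also have "\<dots> = cscale ((-1) powi j) (fourier_coeff X j)"
    by (rule fourier_coeff_compose_uminus[OF assms(1)])
  finally show ?thesis
    by (simp add: vec_eq_iff)
qed

lemma smooth_loop_imp_continuous:
  fixes X :: "complex \<Rightarrow> 'n::finite cmat"
  assumes "smooth_loop X"
  shows "continuous_on UNIV (\<lambda>t. X (cis t))"
proof -
  obtain D :: "nat \<Rightarrow> real \<Rightarrow> 'n cmat" where D: "D 0 = (\<lambda>t. X (cis t))"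
    "\<And>k t. (D k has_vector_derivative D (Suc k) t) (at t)"
    using assms unfolding smooth_loop_def by blast
  have "continuous (at t) (D 0)" for t
    using D(2) by (rule has_vector_derivative_continuous)
  then have "continuous_on UNIV (D 0)"
    by (simp add: continuous_at_imp_continuous_on)
  then show ?thesis
    using D(1) by simp
qed

subsection \<open>Laurent polynomials\<close>

definition laurent_poly :: "int set \<Rightarrow> (int \<Rightarrow> 'n::finite cmat) \<Rightarrow> complex \<Rightarrow> 'n cmat" where
  "laurent_poly S C z = (\<Sum>j\<in>S. cscale (z powi j) (C j))"

lemma fourier_coeff_laurent_poly:
  assumes S: "finite S" and X: "\<forall>z\<in>sphere 0 1. X z = laurent_poly S C z"
  shows "fourier_coeff X j = (if j \<in> S then C j else 0)"
proof -
  have "fourier_coeff X j $ a $ b = (if j \<in> S then C j else 0) $ a $ b" for a b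
  proof -
    have "cis (- of_int j * t) * X (cis t) $ a $ b =
        (\<Sum>i\<in>S. C i $ a $ b * (cis (- of_int j * t) * cis t powi i))" for t
      using X by (simp add: laurent_poly_def sum_distrib_left algebra_simps)
    then have "cis (- of_int j * t) * X (cis t) $ a $ b =
        (\<Sum>i\<in>S. C i $ a $ b * cis (of_int (i - j) * t))" for t
      by (simp only: cis_mult_powi)
    then have "integral {0..2*pi} (\<lambda>t. cis (- of_int j * t) * X (cis t) $ a $ b) =
        integral {0..2*pi} (\<lambda>t. \<Sum>i\<in>S. C i $ a $ b * cis (of_int (i - j) * t))"
      by simp
    also have "\<dots> = (\<Sum>i\<in>S. integral {0..2*pi} (\<lambda>t. C i $ a $ b * cis (of_int (i - j) * t)))"
      by (rule integral_sum[OF S]) (auto intro!: integrable_continuous_real continuous_intros)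
    also have "\<dots> = (\<Sum>i\<in>S. if i = j then C i $ a $ b * (2*pi) else 0)"
      by (intro sum.cong refl, subst integral_mult_right, subst integral_cis_int) simp
    also have "\<dots> = (if j \<in> S then C j $ a $ b * (2*pi) else 0)"
      using S by simp
    finally show ?thesis
      by (simp add: fourier_coeff_nth)
  qed
  then show ?thesis by (simp add: vec_eq_iff)
qed

lemma smooth_loop_laurent_poly:
  assumes "\<forall>z\<in>sphere 0 1. X z = laurent_poly S C z"
  shows "smooth_loop X"
  unfolding smooth_loop_def
proof (intro exI conjI allI)
  define D where "D k t = (\<Sum>i\<in>S. cscale ((\<i> * of_int i) ^ k * cis (of_int i * t)) (C i))"
    for k :: nat and t :: real
  show "D 0 = (\<lambda>t. X (cis t))"
    using assms by (simp add: D_def laurent_poly_def fun_eq_iff cis_power_int)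
  fix k t
  have "((\<lambda>t. (\<i> * of_int i) ^ k * cis (of_int i * t)) has_vector_derivative
        (\<i> * of_int i) ^ Suc k * cis (of_int i * t)) (at t)" for i :: int
    by (auto intro!: derivative_eq_intros
        simp: has_vector_derivative_def scaleR_conv_of_real algebra_simps)
  then show "(D k has_vector_derivative D (Suc k) t) (at t)"
    unfolding D_def[abs_def]
    by (intro has_vector_derivative_sum bounded_linear.has_vector_derivative[OF bounded_linear_cscale])
qed

lemma laurent_poly_cnj_mat:
  assumes "\<forall>j\<in>S. \<forall>a b. Im (C j $ a $ b) = 0"
  shows "cnj_mat (laurent_poly S C z) = laurent_poly S C (cnj z)"
proof -
  have "cnj_mat (laurent_poly S C z) = (\<Sum>j\<in>S. cscale (cnj z powi j) (cnj_mat (C j)))"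
    by (simp add: laurent_poly_def vec_eq_iff)
  also have "\<dots> = laurent_poly S C (cnj z)"
    unfolding laurent_poly_def
  proof (rule sum.cong[OF refl])
    fix j assume "j \<in> S"
    then have "cnj_mat (C j) = C j"
      using assms by (simp add: vec_eq_iff complex_eq_iff)
    then show "cscale (cnj z powi j) (cnj_mat (C j)) = cscale (cnj z powi j) (C j)"
      by simp
  qed
  finally show ?thesis .
qed

lemma laurent_poly_transpose:
  assumes "\<forall>j\<in>S. transpose (C j) = (if even j then C j else - C j)"
  shows "transpose (laurent_poly S C z) = laurent_poly S C (- z)"
proof -
  have "transpose (laurent_poly S C z) = (\<Sum>j\<in>S. cscale (z powi j) (transpose (C j)))"
    by (simp add: laurent_poly_def vec_eq_iff transpose_def)
  also have "\<dots> = laurent_poly S C (- z)"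
    unfolding laurent_poly_def
  proof (rule sum.cong[OF refl])
    fix j assume "j \<in> S"
    then show "cscale (z powi j) (transpose (C j)) = cscale ((- z) powi j) (C j)"
      using assms by (cases "even j") (simp_all add: vec_eq_iff power_int_minus_left)
  qed
  finally show ?thesis .
qed

lemma laurent_poly_in_g_star_mp:
  assumes X: "\<forall>z\<in>sphere 0 1. X z = laurent_poly {- int m..int p} C z"
    and real: "\<forall>j a b. Im (C j $ a $ b) = 0"
    and parity: "\<forall>j. transpose (C j) = (if even j then C j else - C j)"
  shows "X \<in> g_star_mp m p"
proof -
  have coeff: "fourier_coeff X j = (if j \<in> {- int m..int p} then C j else 0)" for j
    by (rule fourier_coeff_laurent_poly[OF _ X]) simp
  have "transpose (0 :: 'a cmat) = 0"
    by (simp add: vec_eq_iff transpose_def)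
  with real parity have "X \<in> Lg_sigma_star"
    using smooth_loop_laurent_poly[OF X] by (simp add: Lg_sigma_star_def coeff)
  moreover have "\<forall>z\<in>sphere 0 1. X z = laurent_poly {- int m..int p} (fourier_coeff X) z"
    using X by (simp add: laurent_poly_def coeff)
  ultimately show ?thesis
    by (simp add: g_star_mp_def laurent_poly_def)
qed

lemma laurent_poly_eq_powi_mult_poly:
  assumes "z \<noteq> 0" and "\<forall>i\<in>S. k \<le> i"
  shows "laurent_poly S C z = cscale (z powi k) (\<Sum>i\<in>S. cscale (z ^ nat (i - k)) (C i))"
proof -
  have "z powi i = z powi k * z ^ nat (i - k)" if "i \<in> S" for i
  proof -
    have "z powi i = z powi (k + int (nat (i - k)))"
      using assms that by simp
    also have "\<dots> = z powi k * z powi int (nat (i - k))"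
      using assms(1) by (rule power_int_add[OF disjI1])
    finally show ?thesis
      by (simp only: power_int_of_nat)
  qed
  then show ?thesis
    by (simp add: laurent_poly_def vec_eq_iff sum_distrib_left mult.assoc)
qed

lemma laurent_poly_eq_powi_mult_poly_inverse:
  assumes "z \<noteq> 0" and "\<forall>i\<in>S. i \<le> k"
  shows "laurent_poly S C z = cscale (z powi k) (\<Sum>i\<in>S. cscale (inverse z ^ nat (k - i)) (C i))"
proof -
  have "z powi i = z powi k * inverse z ^ nat (k - i)" if "i \<in> S" for i
  proof -
    have "z powi i = z powi (k + - int (nat (k - i)))"
      using assms that by simp
    also have "\<dots> = z powi k * z powi (- int (nat (k - i)))"
      using assms(1) by (rule power_int_add[OF disjI1])
    finally show ?thesis
      by (simp only: power_int_minus power_int_of_nat power_inverse)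
  qed
  then show ?thesis
    by (simp add: laurent_poly_def vec_eq_iff sum_distrib_left mult.assoc)
qed

lemma g_star_mp_symmetries:
  assumes "A \<in> g_star_mp m p"
  shows "continuous_on UNIV (\<lambda>t. A (cis t))"
    and "\<forall>z\<in>sphere 0 1. cnj_mat (A z) = A (cnj z)"
    and "\<forall>z\<in>sphere 0 1. transpose (A z) = A (- z)"
proof -
  have "smooth_loop A"
    using assms by (simp add: g_star_mp_def Lg_sigma_star_def)
  then show "continuous_on UNIV (\<lambda>t. A (cis t))"
    by (rule smooth_loop_imp_continuous)
  have A_eq: "\<forall>z\<in>sphere 0 1. A z = laurent_poly {- int m..int p} (fourier_coeff A) z"
    and real: "\<forall>j a b. Im (fourier_coeff A j $ a $ b) = 0"
    and parity: "\<forall>j. transpose (fourier_coeff A j) =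
      (if even j then fourier_coeff A j else - fourier_coeff A j)"
    using assms by (auto simp: g_star_mp_def Lg_sigma_star_def laurent_poly_def)
  show "\<forall>z\<in>sphere 0 1. cnj_mat (A z) = A (cnj z)"
    using A_eq real by (simp add: laurent_poly_cnj_mat)
  show "\<forall>z\<in>sphere 0 1. transpose (A z) = A (- z)"
    using A_eq parity by (simp add: laurent_poly_transpose)
qed

subsection \<open>Holomorphic extension to the unit disc\<close>

definition disc_holomorphic :: "(complex \<Rightarrow> 'n::finite cmat) \<Rightarrow> bool" where
  "disc_holomorphic F \<longleftrightarrow>
     continuous_on (cball 0 1) F \<and> (\<forall>a b. (\<lambda>z. F z $ a $ b) holomorphic_on ball 0 1)"

lemma fourier_coeff_eq_0_if_disc_holomorphic:
  assumes F: "disc_holomorphic F" and j: "j < 0"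
  shows "fourier_coeff F j = 0"
proof -
  have "integral {0..2*pi} (\<lambda>t. cis (- of_int j * t) * F (cis t) $ a $ b) = 0" for a b
  proof -
    define h where "h w = w ^ nat (- j - 1) * F w $ a $ b" for w
    have "(h has_contour_integral 0) (circlepath 0 1)"
    proof (rule Cauchy_theorem_disc[where K = "{}"])
      show "continuous_on (cball 0 1) h"
        using F unfolding h_def disc_holomorphic_def by (intro continuous_intros) auto
      show "h field_differentiable at w" if "w \<in> ball 0 1 - {}" for w
        using F that unfolding h_def disc_holomorphic_def
        by (intro holomorphic_on_imp_differentiable_at[of _ "ball 0 1"] holomorphic_intros) auto
    qed auto
    then have "((\<lambda>t. h (cis t) * \<i> * cis t) has_integral 0) {0..2*pi}"
      unfolding circlepath_def by (subst (asm) has_contour_integral_part_circlepath_iff) auto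
    then have "((\<lambda>t. - \<i> * (h (cis t) * \<i> * cis t)) has_integral - \<i> * 0) {0..2*pi}"
      by (rule has_integral_mult_right)
    moreover have "- \<i> * (h (cis t) * \<i> * cis t) = cis (- of_int j * t) * F (cis t) $ a $ b" for t
    proof -
      have "cis t * cis t ^ nat (- j - 1) = cis t powi (- j)"
        using j by (simp add: power_int_def nat_diff_distrib' flip: power_Suc)
      then show ?thesis
        by (simp add: h_def cis_power_int algebra_simps)
    qed
    ultimately show ?thesis
      by (simp add: integral_unique)
  qed
  then show ?thesis
    by (simp add: fourier_coeff_def vec_eq_iff)
qed

lemma disc_holomorphic_mmult:
  assumes "disc_holomorphic F" "disc_holomorphic G"
  shows "disc_holomorphic (\<lambda>z. F z ** G z)"
  unfolding disc_holomorphic_def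
proof (intro conjI allI)
  show "continuous_on (cball 0 1) (\<lambda>z. F z ** G z)"
    unfolding matrix_matrix_mult_def
    by (intro continuous_intros) (use assms in \<open>simp_all add: disc_holomorphic_def\<close>)
  show "(\<lambda>z. (F z ** G z) $ a $ b) holomorphic_on ball 0 1" for a b
    unfolding matrix_matrix_mult_def
    by (simp, intro holomorphic_intros) (use assms in \<open>simp_all add: disc_holomorphic_def\<close>)
qed

lemma disc_holomorphic_transpose:
  assumes "disc_holomorphic F"
  shows "disc_holomorphic (\<lambda>z. transpose (F z))"
  using assms unfolding disc_holomorphic_def transpose_def
  by (simp, intro conjI allI continuous_intros) simp_all

lemma disc_holomorphic_reflect:
  assumes "disc_holomorphic F"
  shows "disc_holomorphic (\<lambda>z. F (- z))"
  unfolding disc_holomorphic_def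
proof (intro conjI allI)
  have "continuous_on (cball 0 1) F"
    using assms by (simp add: disc_holomorphic_def)
  then show "continuous_on (cball 0 1) (\<lambda>z. F (- z))"
    by (rule continuous_on_compose2[OF _ continuous_on_minus[OF continuous_on_id]]) auto
  fix a b
  have hol: "(\<lambda>z. F z $ a $ b) holomorphic_on ball 0 1"
    using assms by (simp add: disc_holomorphic_def)
  have "(\<lambda>z. - z) holomorphic_on ball 0 1"
    by (intro holomorphic_intros)
  then have "((\<lambda>z. F z $ a $ b) \<circ> uminus) holomorphic_on ball 0 1"
    using hol by (rule holomorphic_on_compose_gen) auto
  then show "(\<lambda>z. F (- z) $ a $ b) holomorphic_on ball 0 1"
    by (simp add: o_def)
qed

lemma disc_holomorphic_matrix_poly:
  "disc_holomorphic (\<lambda>z. \<Sum>i\<in>S. cscale (z ^ e i) (C i))"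
  unfolding disc_holomorphic_def cscale_def
  by (simp, intro conjI allI continuous_intros holomorphic_intros)

lemma LG_Sigma_plus_disc_extension:
  assumes "gp \<in> LG_Sigma_plus"
  obtains G where "disc_holomorphic G" and "\<forall>z\<in>sphere 0 1. G z = gp z"
  using assms unfolding LG_Sigma_plus_def disc_holomorphic_def by blast

lemma LG_Sigma_minus_disc_extension:
  assumes "gm \<in> LG_Sigma_minus"
  obtains H where "disc_holomorphic H" and "\<forall>z\<in>sphere 0 1. H (inverse z) = gm z"
proof -
  obtain G :: "complex \<Rightarrow> 'a cmat" where cont: "continuous_on {z. 1 \<le> norm z} G"
    and hol: "\<forall>a b. (\<lambda>z. G z $ a $ b) holomorphic_on {z. 1 < norm z}"
    and lim: "(G \<longlongrightarrow> mat 1) at_infinity"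
    and eq: "\<forall>z\<in>sphere 0 1. G z = gm z"
    using assms unfolding LG_Sigma_minus_def by blast
  define H where "H w = (if w = 0 then mat 1 else G (inverse w))" for w
  have cont_punctured: "continuous_on (cball 0 1 - {0}) H"
  proof -
    have "continuous_on (cball 0 1 - {0}) (\<lambda>w. G (inverse w))"
      by (rule continuous_on_compose2[OF cont])
        (auto intro!: continuous_intros simp: norm_inverse one_le_inverse)
    then show ?thesis
      by (rule continuous_on_cong[THEN iffD1, rotated 2]) (auto simp: H_def)
  qed
  have "(H \<longlongrightarrow> mat 1) (at 0)"
    using filterlim_compose[OF lim filterlim_inverse_at_infinity]
    by (rule Lim_transform_eventually) (simp add: H_def eventually_at_filter)
  then have cont_0: "continuous (at 0) H"
    by (simp add: continuous_at H_def)
  have cont_H: "continuous_on (cball 0 1) H"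
    unfolding continuous_on_eq_continuous_within
  proof
    fix x :: complex
    assume x: "x \<in> cball 0 1"
    show "continuous (at x within cball 0 1) H"
    proof (cases "x = 0")
      case True
      then show ?thesis
        using cont_0 continuous_at_imp_continuous_at_within by blast
    next
      case False
      have "continuous (at x within cball 0 1 - {0}) H"
        using cont_punctured x False by (simp add: continuous_on_eq_continuous_within)
      moreover have "at x within cball 0 1 - {0} = at x within cball 0 1"
        using False by (intro at_within_nhd[of x "- {0}"]) auto
      ultimately show ?thesis
        by simp
    qed
  qed
  have "(\<lambda>w. H w $ a $ b) holomorphic_on ball 0 1" for a b
  proof (rule no_isolated_singularity[where K = "{0}"])
    show "continuous_on (ball 0 1) (\<lambda>w. H w $ a $ b)"
      by (intro continuous_intros continuous_on_subset[OF cont_H]) auto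
    have "((\<lambda>z. G z $ a $ b) \<circ> inverse) holomorphic_on ball 0 1 - {0}"
      by (rule holomorphic_on_compose_gen[OF _ hol[rule_format]])
        (auto intro!: holomorphic_intros simp: norm_inverse one_less_inverse)
    then have "(\<lambda>w. G (inverse w) $ a $ b) holomorphic_on ball 0 1 - {0}"
      by (simp add: o_def)
    then show "(\<lambda>w. H w $ a $ b) holomorphic_on ball 0 1 - {0}"
      by (rule holomorphic_cong[THEN iffD1, rotated 2]) (auto simp: H_def)
  qed auto
  with cont_H have "disc_holomorphic H"
    by (simp add: disc_holomorphic_def)
  moreover have "\<forall>z\<in>sphere 0 1. H (inverse z) = gm z"
    using eq by (auto simp: H_def)
  ultimately show ?thesis
    by (rule that)
qed

subsection \<open>Twisted conjugation\<close>

definition sigma_conj :: "(complex \<Rightarrow> 'n::finite cmat) \<Rightarrow> (complex \<Rightarrow> 'n cmat) \<Rightarrow> complex \<Rightarrow> 'n cmat" where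
  "sigma_conj K X z = transpose (K (- z)) ** X z ** K z"

lemma Ad_star_eq_sigma_conj:
  assumes "gp \<in> LG_Sigma" and "gm \<in> LG_Sigma"
  shows "Ad_star gp gm A z = Pi_minus (sigma_conj gp A) z + Pi_plus (sigma_conj gm A) z"
proof -
  have "fourier_coeff (\<lambda>w. matrix_inv (K w) ** A w ** K w) = fourier_coeff (sigma_conj K A)"
    if "K \<in> LG_Sigma" for K :: "complex \<Rightarrow> 'a cmat"
  proof (rule fourier_coeff_cong, intro ballI)
    fix w :: complex
    assume "w \<in> sphere 0 1"
    then have "matrix_inv (K w) = transpose (K (- w))"
      using that by (intro matrix_inv_eqI) (simp add: LG_Sigma_def)
    then show "matrix_inv (K w) ** A w ** K w = sigma_conj K A w"
      by (simp add: sigma_conj_def)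
  qed
  then show ?thesis
    using assms by (simp add: Ad_star_def Pi_minus_def Pi_plus_def)
qed

lemma sigma_conj_cnj_mat:
  assumes "K \<in> LG_Sigma" and "\<forall>z\<in>sphere 0 1. cnj_mat (X z) = X (cnj z)"
  shows "\<forall>z\<in>sphere 0 1. cnj_mat (sigma_conj K X z) = sigma_conj K X (cnj z)"
proof
  fix z :: complex
  assume z: "z \<in> sphere 0 1"
  moreover have "- z \<in> sphere 0 1"
    using z by simp
  ultimately show "cnj_mat (sigma_conj K X z) = sigma_conj K X (cnj z)"
    using assms by (simp add: sigma_conj_def cnj_mat_mmult cnj_mat_transpose LG_Sigma_def LG_def)
qed

lemma sigma_conj_transpose:
  assumes "\<forall>z\<in>sphere 0 1. transpose (X z) = X (- z)"
  shows "\<forall>z\<in>sphere 0 1. transpose (sigma_conj K X z) = sigma_conj K X (- z)"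
  using assms by (simp add: sigma_conj_def matrix_transpose_mul matrix_mul_assoc)

lemma continuous_sigma_conj:
  assumes K: "continuous_on UNIV (\<lambda>t. K (cis t))" and X: "continuous_on UNIV (\<lambda>t. X (cis t))"
  shows "continuous_on UNIV (\<lambda>t. sigma_conj K X (cis t))"
proof -
  have "continuous_on UNIV (\<lambda>t. K (cis (t + pi)))"
    by (rule continuous_on_compose2[OF K]) (auto intro!: continuous_intros)
  then have "continuous_on UNIV (\<lambda>t. K (- cis t))"
    by (simp add: cis_mult[symmetric])
  then show ?thesis
    unfolding sigma_conj_def matrix_matrix_mult_def transpose_def
    by (intro continuous_intros K X)
qed

lemma disc_holomorphic_sigma_conj:
  assumes "disc_holomorphic G" and "disc_holomorphic P"
  shows "disc_holomorphic (sigma_conj G P)"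
  unfolding sigma_conj_def[abs_def]
  by (intro disc_holomorphic_mmult disc_holomorphic_transpose disc_holomorphic_reflect assms)

lemma fourier_coeff_sigma_conj_symmetric:
  assumes K: "K \<in> LG_Sigma" and cont: "continuous_on UNIV (\<lambda>t. X (cis t))"
    and cnj: "\<forall>z\<in>sphere 0 1. cnj_mat (X z) = X (cnj z)"
    and tr: "\<forall>z\<in>sphere 0 1. transpose (X z) = X (- z)"
  shows "Im (fourier_coeff (sigma_conj K X) j $ a $ b) = 0"
    and "transpose (fourier_coeff (sigma_conj K X) j) =
      (if even j then fourier_coeff (sigma_conj K X) j else - fourier_coeff (sigma_conj K X) j)"
proof -
  show "Im (fourier_coeff (sigma_conj K X) j $ a $ b) = 0"
    by (rule fourier_coeff_real[OF sigma_conj_cnj_mat[OF K cnj]])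
  have "continuous_on UNIV (\<lambda>t. K (cis t))"
    using K by (simp add: LG_Sigma_def LG_def smooth_loop_imp_continuous)
  then show "transpose (fourier_coeff (sigma_conj K X) j) =
      (if even j then fourier_coeff (sigma_conj K X) j else - fourier_coeff (sigma_conj K X) j)"
    by (intro transpose_fourier_coeff_parity continuous_sigma_conj cont sigma_conj_transpose tr)
qed

lemma fourier_coeff_sigma_conj_below:
  assumes gp: "gp \<in> LG_Sigma_plus" and X: "\<forall>z\<in>sphere 0 1. X z = laurent_poly S C z"
    and S: "\<forall>i\<in>S. k \<le> i" and j: "j < k"
  shows "fourier_coeff (sigma_conj gp X) j = 0"
proof -
  obtain G where G: "disc_holomorphic G" and G_eq: "\<forall>z\<in>sphere 0 1. G z = gp z"
    using LG_Sigma_plus_disc_extension[OF gp] by blast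
  define P where "P = (\<lambda>z. \<Sum>i\<in>S. cscale (z ^ nat (i - k)) (C i))"
  have "\<forall>z\<in>sphere 0 1. sigma_conj gp X z = cscale (z powi k) (sigma_conj G P z)"
  proof
    fix z :: complex
    assume z: "z \<in> sphere 0 1"
    then have "z \<noteq> 0"
      by auto
    then have "X z = cscale (z powi k) (P z)"
      using X z by (simp add: P_def laurent_poly_eq_powi_mult_poly[OF _ S])
    moreover have "G z = gp z" and "G (- z) = gp (- z)"
      using z G_eq by auto
    ultimately show "sigma_conj gp X z = cscale (z powi k) (sigma_conj G P z)"
      by (simp add: sigma_conj_def cscale_mmult_left cscale_mmult_right)
  qed
  then have "fourier_coeff (sigma_conj gp X) j = fourier_coeff (\<lambda>z. cscale (z powi k) (sigma_conj G P z)) j"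
    by (simp only: fourier_coeff_cong)
  also have "\<dots> = fourier_coeff (sigma_conj G P) (j - k)"
    by (rule fourier_coeff_mult_powi)
  also have "\<dots> = 0"
    using j by (intro fourier_coeff_eq_0_if_disc_holomorphic disc_holomorphic_sigma_conj G)
      (simp_all add: P_def disc_holomorphic_matrix_poly)
  finally show ?thesis .
qed

lemma fourier_coeff_sigma_conj_above:
  assumes gm: "gm \<in> LG_Sigma_minus" and X: "\<forall>z\<in>sphere 0 1. X z = laurent_poly S C z"
    and S: "\<forall>i\<in>S. i \<le> k" and j: "k < j"
  shows "fourier_coeff (sigma_conj gm X) j = 0"
proof -
  obtain H where H: "disc_holomorphic H" and H_eq: "\<forall>z\<in>sphere 0 1. H (inverse z) = gm z"
    using LG_Sigma_minus_disc_extension[OF gm] by blast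
  define Q where "Q = (\<lambda>w. \<Sum>i\<in>S. cscale (w ^ nat (k - i)) (C i))"
  have "\<forall>z\<in>sphere 0 1. sigma_conj gm X z = cscale (z powi k) (sigma_conj H Q (inverse z))"
  proof
    fix z :: complex
    assume z: "z \<in> sphere 0 1"
    then have "z \<noteq> 0"
      by auto
    then have "X z = cscale (z powi k) (Q (inverse z))"
      using X z by (simp add: Q_def laurent_poly_eq_powi_mult_poly_inverse[OF _ S])
    moreover have "H (inverse z) = gm z" and "H (- inverse z) = gm (- z)"
      using z H_eq by (auto simp flip: inverse_minus_eq)
    ultimately show "sigma_conj gm X z = cscale (z powi k) (sigma_conj H Q (inverse z))"
      by (simp add: sigma_conj_def cscale_mmult_left cscale_mmult_right)
  qed
  then have "fourier_coeff (sigma_conj gm X) j =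
      fourier_coeff (\<lambda>z. cscale (z powi k) (sigma_conj H Q (inverse z))) j"
    by (simp only: fourier_coeff_cong)
  also have "\<dots> = fourier_coeff (\<lambda>z. sigma_conj H Q (inverse z)) (j - k)"
    by (rule fourier_coeff_mult_powi)
  also have "\<dots> = fourier_coeff (sigma_conj H Q) (k - j)"
    by (simp add: fourier_coeff_compose_inverse)
  also have "\<dots> = 0"
    using j by (intro fourier_coeff_eq_0_if_disc_holomorphic disc_holomorphic_sigma_conj H)
      (simp_all add: Q_def disc_holomorphic_matrix_poly)
  finally show ?thesis .
qed

subsection \<open>The projections Pi_plus and Pi_minus\<close>

lemma Pi_minus_eq_sum:
  assumes "\<forall>j < - int m. fourier_coeff X j = 0"
  shows "Pi_minus X z = (\<Sum>j\<in>{- int m..<0}. cscale (z powi j) (fourier_coeff X j))"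
proof -
  have "Pi_minus X z = (\<Sum>k<m. cscale (inverse z ^ Suc k) (fourier_coeff X (- int (Suc k))))"
    unfolding Pi_minus_def
  proof (rule suminf_finite)
    fix k
    assume "k \<notin> {..<m}"
    then show "cscale (inverse z ^ Suc k) (fourier_coeff X (- int (Suc k))) = 0"
      using assms by (simp add: vec_eq_iff)
  qed simp
  also have "\<dots> = (\<Sum>k<m. cscale (z powi (- int (Suc k))) (fourier_coeff X (- int (Suc k))))"
    by (simp only: power_int_minus power_int_of_nat power_inverse)
  also have "\<dots> = (\<Sum>j\<in>(\<lambda>k. - int (Suc k)) ` {..<m}. cscale (z powi j) (fourier_coeff X j))"
    by (subst sum.reindex) (auto simp: inj_on_def)
  also have "(\<lambda>k. - int (Suc k)) ` {..<m} = {- int m..<0}"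
  proof (intro equalityI subsetI)
    fix j
    assume "j \<in> {- int m..<0}"
    then have "j = - int (Suc (nat (- j - 1)))" and "nat (- j - 1) < m"
      by auto
    then show "j \<in> (\<lambda>k. - int (Suc k)) ` {..<m}"
      by blast
  qed auto
  finally show ?thesis .
qed

lemma Pi_plus_eq_sum:
  assumes "\<forall>j > int p. fourier_coeff X j = 0"
  shows "Pi_plus X z = (\<Sum>j\<in>{0..int p}. cscale (z powi j) (fourier_coeff X j))"
proof -
  have "Pi_plus X z = (\<Sum>k\<le>p. cscale (z ^ k) (fourier_coeff X (int k)))"
    unfolding Pi_plus_def
  proof (rule suminf_finite)
    fix k
    assume "k \<notin> {..p}"
    then show "cscale (z ^ k) (fourier_coeff X (int k)) = 0"
      using assms by (simp add: vec_eq_iff)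
  qed simp
  also have "\<dots> = (\<Sum>j\<in>int ` {..p}. cscale (z powi j) (fourier_coeff X j))"
    by (subst sum.reindex) auto
  also have "int ` {..p} = {0..int p}"
    by (simp add: atMost_atLeast0 image_int_atLeastAtMost)
  finally show ?thesis .
qed

lemma Pi_minus_plus_eq_laurent_poly:
  assumes "\<forall>j < - int m. fourier_coeff Y j = 0" and "\<forall>j > int p. fourier_coeff Z j = 0"
  shows "Pi_minus Y z + Pi_plus Z z =
    laurent_poly {- int m..int p} (\<lambda>j. if j < 0 then fourier_coeff Y j else fourier_coeff Z j) z"
proof -
  let ?d = "\<lambda>j. if j < 0 then fourier_coeff Y j else fourier_coeff Z j"
  have split: "{- int m..int p} = {- int m..<0} \<union> {0..int p}"
    by auto
  have "laurent_poly {- int m..int p} ?d z =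
      (\<Sum>j\<in>{- int m..<0}. cscale (z powi j) (?d j)) + (\<Sum>j\<in>{0..int p}. cscale (z powi j) (?d j))"
    unfolding laurent_poly_def split by (rule sum.union_disjoint) auto
  also have "\<dots> = Pi_minus Y z + Pi_plus Z z"
    unfolding Pi_minus_eq_sum[OF assms(1)] Pi_plus_eq_sum[OF assms(2)]
    by (intro arg_cong2[where f = "(+)"] sum.cong) auto
  finally show ?thesis ..
qed

theorem proposition3p2:
  fixes g gp gm A :: "complex \<Rightarrow> complex ^ 'n::finite ^ 'n" and m p :: nat
  assumes "p \<ge> 1"
    and "g \<in> G_tilde"
    and "gp \<in> LG_Sigma_plus" and "gm \<in> LG_Sigma_minus"
    and "\<forall>z\<in>sphere 0 1. g z = gp z ** matrix_inv (gm z)"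
    and "A \<in> g_star_mp m p"
  shows "Ad_star gp gm A \<in> g_star_mp m p"
proof -
  have A_eq: "\<forall>z\<in>sphere 0 1. A z = laurent_poly {- int m..int p} (fourier_coeff A) z"
    using assms(6) by (simp add: g_star_mp_def laurent_poly_def)
  note symmetric = fourier_coeff_sigma_conj_symmetric[OF _ g_star_mp_symmetries[OF assms(6)]]
  have gp: "gp \<in> LG_Sigma" and gm: "gm \<in> LG_Sigma"
    using assms(3,4) by (simp_all add: LG_Sigma_plus_def LG_Sigma_minus_def)
  have below: "\<forall>j < - int m. fourier_coeff (sigma_conj gp A) j = 0"
    using fourier_coeff_sigma_conj_below[OF assms(3) A_eq, of "- int m"] by auto
  have above: "\<forall>j > int p. fourier_coeff (sigma_conj gm A) j = 0"
    using fourier_coeff_sigma_conj_above[OF assms(4) A_eq, of "int p"] by auto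
  show ?thesis
  proof (rule laurent_poly_in_g_star_mp)
    show "\<forall>z\<in>sphere 0 1. Ad_star gp gm A z = laurent_poly {- int m..int p}
        (\<lambda>j. if j < 0 then fourier_coeff (sigma_conj gp A) j else fourier_coeff (sigma_conj gm A) j) z"
      by (simp add: Ad_star_eq_sigma_conj[OF gp gm] Pi_minus_plus_eq_laurent_poly[OF below above])
  qed (use symmetric[OF gp] symmetric[OF gm] in auto)
qed

end
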